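(* In the two-type setting, suppose $\phi_1\sigma>1$. Then for every $M>0$ there is $\bar k\in\mathbb N$ such that for every $q^0_2\in[0,\bar p_2]$ there is $0\le k\le\bar k$ with $$\prod_{j=0}^{k-1}\phi_1\psi(\beta_2q^j_2)>M,$$ where $q^j_2$ is the second coordinate of $h^j(0,q^0_2)$.
   Context: Two-type limiting map: $\beta_1,\beta_2>0$, $\alpha(1),\alpha(2)\in[0,1)$, $\phi_i=(1-\alpha(i))\beta_i$. For $p\in[0,1]^2$, $S(p)=\beta_1p_1+\beta_2p_2$ and $f^{(i)}(p)=(1-e^{-S(p)})\beta_ip_i/S(p)$ ($=0$ if $S(p)=0$). For $\alpha\in(0,1)$ let $g_\alpha(x)=\frac{(1-\sqrt{1-4(1-\alpha)x(1-x)})^3}{8(1-\alpha)^2x^2}$ for $x\in(0,1]$ and $g_\alpha(0)=0$; let $g_0(x)=x$ for $x\le1/2$ and $g_0(x)=(1-x)^3/x^2$ for $x>1/2$. $h(p)=(h_1(p),h_2(p))$ with $h_i(p)=g_{\alpha(i)}(f^{(i)}(p))$; note $h(0,x)=(0,g_{\alpha(2)}(1-e^{-\beta_2x}))$. $\bar p_i=\sup_{x\in[0,1]}g_{\alpha(i)}(x)$. $\psi(x)=(1-e^{-x})/x$, $\psi(0)=1$. For $x\in[0,1]$ let $\Psi_n(x)=\big(\prod_{k=0}^{n-1}\psi(\beta_2h^k_2(0,x))\big)^{1/n}$, $\underline\Psi(x)=\liminf_{n\to\infty}\Psi_n(x)$, and $\sigma=\inf_{x\in[0,\bar p_2]}\underline\Psi(x)$.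 *)

theory Defs
  imports "HOL-Analysis.Analysis" "HOL-Library.Liminf_Limsup"
begin

definition gfun :: "real \<Rightarrow> real \<Rightarrow> real" where
  "gfun a x =
     (if a = 0 then (if x \<le> 1/2 then x else (1 - x)^3 / x^2)
      else (if x = 0 then 0
            else (1 - sqrt (1 - 4 * (1 - a) * x * (1 - x)))^3 / (8 * (1 - a)^2 * x^2)))"

definition psi :: "real \<Rightarrow> real" where
  "psi x = (if x = 0 then 1 else (1 - exp (- x)) / x)"

definition Ssum :: "real \<Rightarrow> real \<Rightarrow> real \<times> real \<Rightarrow> real" where
  "Ssum b1 b2 p = b1 * fst p + b2 * snd p"

definition fcomp :: "real \<Rightarrow> real \<Rightarrow> real \<Rightarrow> real \<Rightarrow> real \<times> real \<Rightarrow> real" where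
  "fcomp b1 b2 bi xi p =
     (if Ssum b1 b2 p = 0 then 0
      else (1 - exp (- Ssum b1 b2 p)) * bi * xi / Ssum b1 b2 p)"

definition hmap :: "real \<Rightarrow> real \<Rightarrow> real \<Rightarrow> real \<Rightarrow> real \<times> real \<Rightarrow> real \<times> real" where
  "hmap b1 b2 a1 a2 p =
     (gfun a1 (fcomp b1 b2 b1 (fst p) p), gfun a2 (fcomp b1 b2 b2 (snd p) p))"

definition pbar :: "real \<Rightarrow> real" where
  "pbar a = (SUP x\<in>{0..1}. gfun a x)"

definition Psi_n :: "real \<Rightarrow> real \<Rightarrow> real \<Rightarrow> real \<Rightarrow> nat \<Rightarrow> real \<Rightarrow> real" where
  "Psi_n b1 b2 a1 a2 n x =
     (\<Prod>k<n. psi (b2 * snd ((hmap b1 b2 a1 a2 ^^ k) (0, x)))) powr (1 / real n)"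

definition Psi_liminf :: "real \<Rightarrow> real \<Rightarrow> real \<Rightarrow> real \<Rightarrow> real \<Rightarrow> ereal" where
  "Psi_liminf b1 b2 a1 a2 x = liminf (\<lambda>n. ereal (Psi_n b1 b2 a1 a2 n x))"

definition sigma :: "real \<Rightarrow> real \<Rightarrow> real \<Rightarrow> real \<Rightarrow> ereal" where
  "sigma b1 b2 a1 a2 = (INF x\<in>{0..pbar a2}. Psi_liminf b1 b2 a1 a2 x)"

end

theory Submission
  imports Defs
begin

text \<open>On the axis \<open>p\<^sub>1 = 0\<close> the map \<open>h\<close> acts on the second coordinate as the continuous
  map \<open>q \<mapsto> g\<^sub>\<alpha>\<^sub>2(1 - exp(-\<beta>\<^sub>2 q))\<close>, so the \<open>k\<close>-th product is a continuous function of the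
  starting point. For a fixed starting point, \<open>\<phi>\<^sub>1 \<sigma> > 1\<close> gives \<open>c\<close> with \<open>\<phi>\<^sub>1 c > 1\<close> lying below
  the lower limit of the geometric means \<open>\<Psi>\<^sub>n\<close>; hence the \<open>n\<close>-th product eventually exceeds
  \<open>(\<phi>\<^sub>1 c)\<^sup>n\<close> and thus \<open>M\<close>. The starting points where the \<open>k\<close>-th product exceeds \<open>M\<close> form
  relatively open sets covering the compact interval \<open>[0, pbar a2]\<close>, so finitely many \<open>k\<close> suffice.\<close>

lemma mult_one_minus_le_quarter: "x * (1 - x) \<le> (1 / 4 :: real)"
proof -
  have "0 \<le> (x - 1/2)\<^sup>2" by simp
  thus ?thesis by (simp add: power2_eq_square algebra_simps)
qed

lemma gfun_radicand_nonneg: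
  fixes a x :: real
  assumes "0 \<le> a" "a < 1"
  shows "0 \<le> 1 - 4 * (1 - a) * x * (1 - x)"
proof -
  have "(1 - a) * (x * (1 - x)) \<le> (1 - a) * (1/4)"
    using mult_one_minus_le_quarter assms by (intro mult_left_mono) auto
  thus ?thesis using assms by (simp add: algebra_simps)
qed

text \<open>Rationalising the numerator removes the apparent singularity of \<open>g\<^sub>\<alpha>\<close> at \<open>0\<close>.\<close>

lemma gfun_rationalized:
  assumes "0 < a" "a < 1"
  shows "gfun a x = 8 * (1 - a) * x * (1 - x)^3 / (1 + sqrt (1 - 4 * (1 - a) * x * (1 - x)))^3"
proof (cases "x = 0")
  case True
  thus ?thesis by (simp add: gfun_def)
next
  case False
  define u where "u = 4 * (1 - a) * x * (1 - x)"
  define s where "s = sqrt (1 - u)"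
  have u1: "0 \<le> 1 - u"
    unfolding u_def using gfun_radicand_nonneg assms by simp
  have s0: "0 \<le> s" unfolding s_def using u1 by simp
  have "s\<^sup>2 = 1 - u" unfolding s_def using u1 by simp
  hence "(1 - s) * (1 + s) = u" by (simp add: algebra_simps power2_eq_square)
  hence "1 - s = u / (1 + s)" using s0 by (simp add: eq_divide_eq)
  hence "(1 - s)^3 = u^3 / (1 + s)^3" by (simp add: power_divide)
  hence "gfun a x = (u^3 / (8 * (1 - a)^2 * x^2)) / (1 + s)^3"
    using assms False by (simp add: gfun_def s_def u_def)
  also have "u^3 / (8 * (1 - a)^2 * x^2) = 8 * (1 - a) * x * (1 - x)^3"
  proof -
    have "u^3 = (8 * (1 - a) * x * (1 - x)^3) * (8 * (1 - a)^2 * x^2)"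
      unfolding u_def by (simp add: power2_eq_square power3_eq_cube algebra_simps)
    thus ?thesis using assms False by (simp add: divide_eq_eq)
  qed
  finally show ?thesis by (simp add: s_def u_def)
qed

lemma continuous_on_gfun:
  assumes "0 \<le> a" "a < 1"
  shows "continuous_on UNIV (gfun a)"
proof (cases "a = 0")
  case True
  have "continuous_on UNIV (\<lambda>x::real. if x \<le> 1/2 then x else (1 - x)^3 / x^2)"
  proof (rule continuous_on_cases_le)
    show "continuous_on {x \<in> UNIV. 1/2 \<le> x} (\<lambda>x::real. (1 - x)^3 / x^2)"
      by (intro continuous_intros) auto
  qed (auto intro!: continuous_intros simp: field_simps power2_eq_square power3_eq_cube)
  moreover have "gfun a = (\<lambda>x. if x \<le> 1/2 then x else (1 - x)^3 / x^2)"
    using True by (simp add: gfun_def fun_eq_iff)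
  ultimately show ?thesis by simp
next
  case False
  hence "0 < a" using assms by simp
  have denom_nonzero: "1 + sqrt (1 - (4 - 4 * a) * x * (1 - x)) \<noteq> 0" for x
  proof -
    have "0 \<le> sqrt (1 - 4 * (1 - a) * x * (1 - x))"
      using gfun_radicand_nonneg[OF assms] by simp
    moreover have "4 - 4 * a = 4 * (1 - a)" by simp
    ultimately show ?thesis by (metis add_nonneg_eq_0_iff zero_le_one zero_neq_one)
  qed
  have "continuous_on UNIV
      (\<lambda>x. 8 * (1 - a) * x * (1 - x)^3 / (1 + sqrt (1 - 4 * (1 - a) * x * (1 - x)))^3)"
    by (rule continuous_intros | simp add: denom_nonzero)+
  thus ?thesis
    using gfun_rationalized[OF \<open>0 < a\<close> assms(2)] by (simp add: fun_eq_iff)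
qed

lemma psi_pos: "psi x > 0"
proof -
  consider "x = 0" | "x > 0" | "x < 0" by linarith
  thus ?thesis
    by cases (auto simp: psi_def divide_pos_pos divide_neg_neg)
qed

lemma isCont_psi: "isCont psi x"
proof (cases "x = 0")
  case True
  have "((\<lambda>y::real. 1 - exp (-y)) has_field_derivative 1) (at 0)"
    by (auto intro!: derivative_eq_intros)
  hence "((\<lambda>y. (1 - exp (-y)) / y) \<longlongrightarrow> 1) (at (0::real))"
    by (simp add: has_field_derivative_iff)
  hence "(psi \<longlongrightarrow> 1) (at 0)"
    by (rule Lim_transform_eventually) (auto simp: psi_def eventually_at_filter)
  thus ?thesis using True by (simp add: isCont_def psi_def)
next
  case False
  have "((\<lambda>y. (1 - exp (-y)) / y) \<longlongrightarrow> (1 - exp (-x)) / x) (at x)"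
    using False by (intro tendsto_intros) auto
  moreover have "\<forall>\<^sub>F y in at x. (1 - exp (-y)) / y = psi y"
    using tendsto_imp_eventually_ne[OF tendsto_ident_at False]
    by (rule eventually_mono) (simp add: psi_def)
  ultimately have "(psi \<longlongrightarrow> (1 - exp (-x)) / x) (at x)"
    by (rule Lim_transform_eventually)
  thus ?thesis using False by (simp add: isCont_def psi_def)
qed

lemma continuous_on_funpow:
  fixes f :: "'a::topological_space \<Rightarrow> 'a"
  assumes "continuous_on UNIV f"
  shows "continuous_on UNIV (f ^^ n)"
proof (induction n)
  case (Suc n)
  hence "continuous_on UNIV (f \<circ> (f ^^ n))"
    using assms by (intro continuous_on_compose) (auto intro: continuous_on_subset)
  thus ?case by simp
qed (simp add: continuous_on_id)

lemma hmap_axis: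
  assumes "b2 > 0"
  shows "hmap b1 b2 a1 a2 (0, y) = (0, gfun a2 (1 - exp (- (b2 * y))))"
  using assms by (simp add: hmap_def fcomp_def Ssum_def gfun_def)

lemma funpow_hmap_axis:
  assumes "b2 > 0"
  shows "(hmap b1 b2 a1 a2 ^^ j) (0, q) = (0, ((\<lambda>y. gfun a2 (1 - exp (- (b2 * y)))) ^^ j) q)"
  by (induction j) (simp_all add: hmap_axis[OF assms])

lemma continuous_on_funpow_hmap_axis:
  assumes "b2 > 0" "0 \<le> a2" "a2 < 1"
  shows "continuous_on UNIV (\<lambda>q. snd ((hmap b1 b2 a1 a2 ^^ j) (0, q)))"
proof -
  have "continuous_on UNIV (\<lambda>y. gfun a2 (1 - exp (- (b2 * y))))"
    by (rule continuous_on_compose2[OF continuous_on_gfun[OF assms(2,3)]])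
       (auto intro!: continuous_intros)
  thus ?thesis
    using continuous_on_funpow by (simp add: funpow_hmap_axis[OF assms(1)])
qed

lemma continuous_on_psi_orbit:
  assumes "b2 > 0" "0 \<le> a2" "a2 < 1"
  shows "continuous_on UNIV (\<lambda>q. psi (b2 * snd ((hmap b1 b2 a1 a2 ^^ j) (0, q))))"
proof -
  have "continuous_on UNIV psi"
    by (simp add: continuous_at_imp_continuous_on isCont_psi)
  thus ?thesis
    by (rule continuous_on_compose2)
       (auto intro!: continuous_on_mult continuous_on_const continuous_on_funpow_hmap_axis assms)
qed

lemma prod_gt_of_liminf_geometric_mean:
  fixes f :: "nat \<Rightarrow> real" and phi M :: real
  assumes f_pos: "\<And>k. f k > 0" and phi: "phi > 0"
    and growth: "ereal phi * liminf (\<lambda>n. ereal ((\<Prod>k<n. f k) powr (1 / real n))) > 1"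
  shows "\<exists>n. (\<Prod>k<n. phi * f k) > M"
proof -
  define L where "L = liminf (\<lambda>n. ereal ((\<Prod>k<n. f k) powr (1 / real n)))"
  have "ereal (1 / phi) < L"
  proof (rule ccontr)
    assume "\<not> ereal (1 / phi) < L"
    hence "ereal phi * L \<le> ereal phi * ereal (1 / phi)"
      using phi by (intro ereal_mult_left_mono) auto
    also have "\<dots> = 1" using phi by simp
    finally show False using growth by (simp add: L_def)
  qed
  then obtain c where c_lower: "1 / phi < c" and c_upper: "ereal c < L"
    using ereal_dense2 by (metis ereal_less(2) less_ereal.simps(1))
  have "c > 0" using c_lower phi by (smt (verit) divide_pos_pos)
  have phic: "phi * c > 1" using c_lower phi by (simp add: field_simps)
  obtain N where N: "\<And>n. n \<ge> N \<Longrightarrow> c < (\<Prod>k<n. f k) powr (1 / real n)"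
    using less_LiminfD[OF c_upper[unfolded L_def]] by (auto simp: eventually_sequentially)
  obtain m where m: "M < (phi * c) ^ m" using real_arch_pow[OF phic] by blast
  define n where "n = m + N + 1"
  define P where "P = (\<Prod>k<n. f k)"
  have "P > 0" unfolding P_def by (intro prod_pos) (simp add: f_pos)
  have "c ^ n < (P powr (1 / real n)) ^ n"
    using N[of n] \<open>c > 0\<close> by (intro power_strict_mono) (auto simp: n_def P_def)
  also have "\<dots> = (P powr (1 / real n)) powr real n"
    using \<open>P > 0\<close> by (simp add: powr_realpow)
  also have "\<dots> = P"
    using \<open>P > 0\<close> by (simp add: powr_powr n_def)
  finally have "(phi * c) ^ n < phi ^ n * P"
    using phi by (simp add: power_mult_distrib)
  moreover have "(phi * c) ^ m \<le> (phi * c) ^ n"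
    using phic by (intro power_increasing) (auto simp: n_def)
  moreover have "(\<Prod>k<n. phi * f k) = phi ^ n * P"
    by (simp add: P_def prod.distrib)
  ultimately show ?thesis using m by (intro exI[of _ n]) linarith
qed

lemma compact_uniform_index_bound:
  fixes F :: "nat \<Rightarrow> 'a::topological_space \<Rightarrow> real"
  assumes "compact K" and cont: "\<And>k. continuous_on K (F k)"
    and pointwise: "\<And>q. q \<in> K \<Longrightarrow> \<exists>k. F k q > M"
  shows "\<exists>kbar. \<forall>q\<in>K. \<exists>k\<le>kbar. F k q > M"
proof -
  have "\<exists>U. open U \<and> U \<inter> K = F k -` {M<..} \<inter> K" for k
    using cont[of k] by (simp add: continuous_on_open_invariant)
  then obtain U where U_open: "\<And>k. open (U k)"
    and U_trace: "\<And>k. U k \<inter> K = F k -` {M<..} \<inter> K"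
    by metis
  have "K \<subseteq> (\<Union>k. U k)" using pointwise U_trace by blast
  then obtain C where "finite C" and C_cover: "K \<subseteq> (\<Union>k\<in>C. U k)"
    using compactE_image[OF \<open>compact K\<close>, of UNIV U] U_open by auto
  have "\<exists>k\<le>Max (insert 0 C). F k q > M" if "q \<in> K" for q
  proof -
    obtain k where "k \<in> C" "q \<in> U k" using C_cover \<open>q \<in> K\<close> by blast
    thus ?thesis
      using U_trace \<open>q \<in> K\<close> \<open>finite C\<close> by (intro exI[of _ k]) auto
  qed
  thus ?thesis by blast
qed

theorem mainTheorem18:
  fixes b1 b2 a1 a2 :: real
  assumes "b1 > 0" and "b2 > 0"
    and "0 \<le> a1" and "a1 < 1" and "0 \<le> a2" and "a2 < 1"
    and "ereal ((1 - a1) * b1) * sigma b1 b2 a1 a2 > 1"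
  shows "\<forall>M > 0. \<exists>kbar :: nat. \<forall>q0 \<in> {0..pbar a2}. \<exists>k \<le> kbar.
           (\<Prod>j<k. (1 - a1) * b1 * psi (b2 * snd ((hmap b1 b2 a1 a2 ^^ j) (0, q0)))) > M"
proof (intro allI impI)
  fix M :: real
  let ?phi = "(1 - a1) * b1"
  let ?F = "\<lambda>k q0. \<Prod>j<k. ?phi * psi (b2 * snd ((hmap b1 b2 a1 a2 ^^ j) (0, q0)))"
  have phi: "?phi > 0" using assms by simp
  have pointwise: "\<exists>k. ?F k q0 > M" if "q0 \<in> {0..pbar a2}" for q0
  proof (rule prod_gt_of_liminf_geometric_mean[OF psi_pos phi])
    have "sigma b1 b2 a1 a2 \<le> Psi_liminf b1 b2 a1 a2 q0"
      unfolding sigma_def using that by (rule INF_lower)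
    hence "ereal ?phi * sigma b1 b2 a1 a2 \<le> ereal ?phi * Psi_liminf b1 b2 a1 a2 q0"
      using phi by (intro ereal_mult_left_mono) auto
    thus "1 < ereal ?phi * liminf (\<lambda>n. ereal ((\<Prod>k<n.
        psi (b2 * snd ((hmap b1 b2 a1 a2 ^^ k) (0, q0)))) powr (1 / real n)))"
      using assms(7) by (simp add: Psi_liminf_def Psi_n_def)
  qed
  have continuous: "continuous_on {0..pbar a2} (?F k)" for k
    using continuous_on_psi_orbit[OF assms(2,5,6)]
    by (auto intro!: continuous_intros intro: continuous_on_subset)
  show "\<exists>kbar. \<forall>q0\<in>{0..pbar a2}. \<exists>k\<le>kbar. ?F k q0 > M"
    by (rule compact_uniform_index_bound[OF compact_Icc continuous pointwise])
qed

end
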